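(* Consider a downlink system with $M\ge 1$ single-antenna access points (APs) $\mathscr{A}=\{1,\dots,M\}$ and $N\ge 1$ single-antenna devices $\mathscr{D}=\{1,\dots,N\}$. Every AP–device link $(i,j)$ has instantaneous received SNR $g_{ij}=\rho|h_{ij}|^2$, where the fades $h_{ij}\sim\mathcal{CN}(0,1)$ are i.i.d. (Rayleigh fading) and constant over one time cycle of duration $T$, and $\rho=P_t/(W\sigma_0)$ is the common average SNR, with $P_t$ the transmit power, $W$ the bandwidth and $\sigma_0$ the noise power spectral density. With the APs transmitting cooperatively, the achievable rate of device $j$ is $\mathcal{R}_j=W\log_2\!\big(1+\sum_{i\in\mathscr{A}}g_{ij}\big)$. The controller knows all $g_{ij}$ perfectly and, in each cycle, schedules exactly $K\in\{1,\dots,N\}$ devices (a set $\mathcal{S}$ with $|\mathcal{S}|=K$, which may depend on the channel realization), each receiving a packet of $B'=\frac{N}{K}B$ bits in TDMA fashion at rate $\mathcal{R}_j$; the transmission is in outage if $\sum_{j\in\mathcal{S}} B'/\mathcal{R}_j > T$. With $B,T,W,\sigma_0,N,M,K$ fixed (zero multiplexing gain), define the diversity order $d=-\lim_{P_t\to\infty}\frac{\log \mathbb{P}_{\mathrm{out}}}{\log P_t}$. Then the maximum diversity order achievable by such a scheduler (attained by scheduling the $K$ devices with the largest $\mathcal{R}_j$) is $N-K+1$ when $M=1$, and $M(N-K+1)$ for general $M$.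
   Context: $\mathbb{P}_{\mathrm{out}}$ denotes the probability (over the fading) that the scheduled transmission in a cycle is in outage. Logarithms of rates are base 2. *)

theory Defs
  imports "HOL-Probability.Probability"
begin

text \<open>Channel realizations: H (i,j) is the complex fade h_ij of the link from AP i
  (i in {1..M}) to device j (j in {1..N}).  The fades are i.i.d. CN(0,1), i.e. each has
  density exp(-|z|^2)/pi with respect to Lebesgue measure on the complex plane.\<close>

definition fade_measure :: "nat \<Rightarrow> nat \<Rightarrow> (nat \<times> nat \<Rightarrow> complex) measure" where
  "fade_measure M N =
     PiM ({1..M} \<times> {1..N}) (\<lambda>_. density lborel (\<lambda>z::complex. ennreal (exp (- (cmod z)\<^sup>2) / pi)))"

definition avg_snr :: "real \<Rightarrow> real \<Rightarrow> real \<Rightarrow> real" where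
  "avg_snr W \<sigma>0 Pt = Pt / (W * \<sigma>0)"

definition rate :: "real \<Rightarrow> real \<Rightarrow> nat \<Rightarrow> real \<Rightarrow> (nat \<times> nat \<Rightarrow> complex) \<Rightarrow> nat \<Rightarrow> real" where
  "rate W \<sigma>0 M Pt H j = W * log 2 (1 + (\<Sum>i\<in>{1..M}. avg_snr W \<sigma>0 Pt * (cmod (H (i, j)))\<^sup>2))"

definition in_outage :: "real \<Rightarrow> real \<Rightarrow> real \<Rightarrow> real \<Rightarrow> nat \<Rightarrow> nat \<Rightarrow> nat \<Rightarrow> real
    \<Rightarrow> nat set \<Rightarrow> (nat \<times> nat \<Rightarrow> complex) \<Rightarrow> bool" where
  "in_outage B T W \<sigma>0 M N K Pt S H \<longleftrightarrow>
     (\<Sum>j\<in>S. (real N / real K * B) / rate W \<sigma>0 M Pt H j) > T"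

type_synonym scheduler = "real \<Rightarrow> (nat \<times> nat \<Rightarrow> complex) \<Rightarrow> nat set"

definition valid_scheduler :: "nat \<Rightarrow> nat \<Rightarrow> scheduler \<Rightarrow> bool" where
  "valid_scheduler N K sched \<longleftrightarrow>
     (\<forall>Pt H. sched Pt H \<subseteq> {1..N} \<and> card (sched Pt H) = K)"

definition topK_scheduler :: "real \<Rightarrow> real \<Rightarrow> nat \<Rightarrow> nat \<Rightarrow> nat \<Rightarrow> scheduler \<Rightarrow> bool" where
  "topK_scheduler W \<sigma>0 M N K sched \<longleftrightarrow> valid_scheduler N K sched \<and>
     (\<forall>Pt H. \<forall>j\<in>sched Pt H. \<forall>j'\<in>{1..N} - sched Pt H.
        rate W \<sigma>0 M Pt H j' \<le> rate W \<sigma>0 M Pt H j)"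

definition measurable_outage :: "real \<Rightarrow> real \<Rightarrow> real \<Rightarrow> real \<Rightarrow> nat \<Rightarrow> nat \<Rightarrow> nat \<Rightarrow> scheduler \<Rightarrow> bool" where
  "measurable_outage B T W \<sigma>0 M N K sched \<longleftrightarrow>
     (\<forall>Pt>0. {H \<in> space (fade_measure M N). in_outage B T W \<sigma>0 M N K Pt (sched Pt H) H}
              \<in> sets (fade_measure M N))"

definition outage_prob :: "real \<Rightarrow> real \<Rightarrow> real \<Rightarrow> real \<Rightarrow> nat \<Rightarrow> nat \<Rightarrow> nat \<Rightarrow> scheduler \<Rightarrow> real \<Rightarrow> real" where
  "outage_prob B T W \<sigma>0 M N K sched Pt =
     measure (fade_measure M N)
       {H \<in> space (fade_measure M N). in_outage B T W \<sigma>0 M N K Pt (sched Pt H) H}"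

definition has_diversity_order :: "real \<Rightarrow> real \<Rightarrow> real \<Rightarrow> real \<Rightarrow> nat \<Rightarrow> nat \<Rightarrow> nat \<Rightarrow> scheduler \<Rightarrow> real \<Rightarrow> bool" where
  "has_diversity_order B T W \<sigma>0 M N K sched d \<longleftrightarrow>
     ((\<lambda>Pt. - (ln (outage_prob B T W \<sigma>0 M N K sched Pt) / ln Pt)) \<longlongrightarrow> d) at_top"

end

theory Submission
  imports Defs "HOL-Real_Asymp.Real_Asymp"
begin

text \<open>Let \<open>n = M (N - K + 1)\<close>; the outage probability is squeezed between \<open>A / P\<^sub>t\<^sup>n\<close> and
  \<open>C / P\<^sub>t\<^sup>n\<close>. A device is slow (its rate is below a fixed threshold) iff
  \<open>\<rho> \<Sum>\<^sub>i |h\<^sub>i\<^sub>j|\<^sup>2\<close> is below a constant, and a \<open>CN(0,1)\<close> fade satisfies \<open>|h|\<^sup>2 < \<epsilon>\<close>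
  with probability between \<open>\<epsilon> exp (-\<epsilon>)\<close> and \<open>\<epsilon>\<close>, independently of the other fades.
  Lower bound, for any scheduler: every set of \<open>K\<close> devices meets \<open>{1..N-K+1}\<close>, so if all fades of
  these \<open>N - K + 1\<close> devices are small, some scheduled device alone exceeds the time budget.
  Upper bound, for the top-\<open>K\<close> scheduler: in an outage some scheduled device is slow, hence so are
  the \<open>N - K\<close> unscheduled devices, whose rates are smaller; a union bound over the sets of
  \<open>N - K + 1\<close> devices concludes.\<close>

subsection \<open>Power-law decay\<close>

lemma neg_ln_div_ln_antimono:
  fixes x y z :: real
  assumes "1 < x" "0 < y" "y \<le> z"
  shows "- (ln z / ln x) \<le> - (ln y / ln x)"
proof -
  have "ln y / ln x \<le> ln z / ln x"
    using assms by (intro divide_right_mono) auto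
  then show ?thesis
    by simp
qed

lemma tendsto_neg_ln_power_div_ln:
  assumes "A > 0"
  shows "((\<lambda>x. - (ln (A / x ^ n) / ln x)) \<longlongrightarrow> real n) at_top"
proof -
  have "((\<lambda>x. (real n * ln x - ln A) / ln x) \<longlongrightarrow> real n) at_top"
    by real_asymp
  moreover have "eventually (\<lambda>x. (real n * ln x - ln A) / ln x = - (ln (A / x ^ n) / ln x)) at_top"
    using eventually_gt_at_top[of 0]
    by eventually_elim (use assms in \<open>simp add: ln_div ln_realpow diff_divide_distrib\<close>)
  ultimately show ?thesis
    by (rule Lim_transform_eventually)
qed

lemma power_law_exponent:
  fixes f :: "real \<Rightarrow> real"
  assumes "A > 0" "C > 0"
    and "eventually (\<lambda>x. A / x ^ n \<le> f x \<and> f x \<le> C / x ^ n) at_top"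
  shows "((\<lambda>x. - (ln (f x) / ln x)) \<longlongrightarrow> real n) at_top"
proof (rule tendsto_sandwich[OF _ _ tendsto_neg_ln_power_div_ln[OF assms(2)]
                                    tendsto_neg_ln_power_div_ln[OF assms(1)]])
  have "eventually (\<lambda>x. 1 < x \<and> 0 < A / x ^ n \<and> A / x ^ n \<le> f x \<and> f x \<le> C / x ^ n) at_top"
    using eventually_gt_at_top[of 1] assms(3) by eventually_elim (use assms(1) in simp)
  then show "eventually (\<lambda>x. - (ln (C / x ^ n) / ln x) \<le> - (ln (f x) / ln x)) at_top"
    and "eventually (\<lambda>x. - (ln (f x) / ln x) \<le> - (ln (A / x ^ n) / ln x)) at_top"
    by (eventually_elim, meson neg_ln_div_ln_antimono less_le_trans)+
qed

lemma power_law_exponent_le: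
  fixes f :: "real \<Rightarrow> real"
  assumes "A > 0" "eventually (\<lambda>x. A / x ^ n \<le> f x) at_top"
    and "((\<lambda>x. - (ln (f x) / ln x)) \<longlongrightarrow> d) at_top"
  shows "d \<le> real n"
proof (rule tendsto_le[OF _ tendsto_neg_ln_power_div_ln[OF assms(1)] assms(3)])
  show "eventually (\<lambda>x. - (ln (f x) / ln x) \<le> - (ln (A / x ^ n) / ln x)) at_top"
    using eventually_gt_at_top[of 1] assms(2)
    by eventually_elim (rule neg_ln_div_ln_antimono, use assms(1) in simp_all)
qed simp

subsection \<open>Top sets\<close>

definition top_set :: "'a set \<Rightarrow> ('a \<Rightarrow> 'b::linorder) \<Rightarrow> 'a set \<Rightarrow> bool" where
  "top_set A R S \<longleftrightarrow> S \<subseteq> A \<and> (\<forall>j\<in>S. \<forall>j'\<in>A - S. R j' \<le> R j)"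

lemma top_set_exists:
  assumes "finite A" "k \<le> card A"
  shows "\<exists>S. top_set A R S \<and> card S = k"
  using assms(2)
proof (induction k)
  case 0
  show ?case by (intro exI[of _ "{}"]) (simp add: top_set_def)
next
  case (Suc k)
  then obtain S where S: "top_set A R S" "card S = k" by auto
  then have "finite S" "A - S \<noteq> {}"
    using Suc.prems assms(1) by (auto simp: top_set_def dest: finite_subset card_mono)
  obtain j0 where "j0 \<in> A - S" "R j0 = Max (R ` (A - S))"
    using Max_in[of "R ` (A - S)"] \<open>A - S \<noteq> {}\<close> assms(1) by fastforce
  then have j0: "j0 \<in> A - S" "\<And>j. j \<in> A - S \<Longrightarrow> R j \<le> R j0"
    using assms(1) by auto
  have "top_set A R (insert j0 S)"
    using S(1) j0 by (auto simp: top_set_def)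
  moreover have "card (insert j0 S) = Suc k"
    using S(2) j0(1) \<open>finite S\<close> by simp
  ultimately show ?case by blast
qed

lemma sum_top_set_eq:
  assumes "finite A" "top_set A R S" "top_set A R S'" "card S = card S'"
  shows "(\<Sum>j\<in>S. f (R j)) = (\<Sum>j\<in>S'. f (R j))"
proof -
  have fin: "finite S" "finite S'"
    using assms by (auto simp: top_set_def dest: finite_subset)
  have same_value: "R x = R y" if "x \<in> S - S'" "y \<in> S' - S" for x y
    using assms(2,3) that by (fastforce simp: top_set_def intro: order.antisym)
  have card_eq: "card (S - S') = card (S' - S)"
    using assms(4) fin card_Diff_subset_Int[of S S'] card_Diff_subset_Int[of S' S]
    by (simp add: Int_commute)
  obtain h where h: "bij_betw h (S - S') (S' - S)"
    using finite_same_card_bij[OF _ _ card_eq] fin by blast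
  have "(\<Sum>j\<in>S - S'. f (R j)) = (\<Sum>j\<in>S - S'. f (R (h j)))"
    using same_value bij_betwE[OF h] by (intro sum.cong) force+
  also have "\<dots> = (\<Sum>j\<in>S' - S. f (R j))"
    using h by (rule sum.reindex_bij_betw)
  finally have "(\<Sum>j\<in>S - S'. f (R j)) = (\<Sum>j\<in>S' - S. f (R j))" .
  then show ?thesis
    using fin by (metis Int_commute sum.Int_Diff)
qed

subsection \<open>The fade distribution\<close>

definition cgauss :: "complex measure" where
  "cgauss = density lborel (\<lambda>z. ennreal (exp (- (cmod z)\<^sup>2) / pi))"

lemma sets_cgauss [simp, measurable_cong]: "sets cgauss = sets borel"
  and space_cgauss [simp]: "space cgauss = UNIV"
  by (simp_all add: cgauss_def)

lemma cgauss_density_eq_prod_normal: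
  "exp (- (cmod z)\<^sup>2) / pi = (\<Prod>b\<in>Basis. normal_density 0 (1 / sqrt 2) (z \<bullet> b))"
proof -
  have "(\<Prod>b\<in>Basis. normal_density 0 (1 / sqrt 2) (z \<bullet> b))
      = exp (- (Re z)\<^sup>2) / sqrt pi * (exp (- (Im z)\<^sup>2) / sqrt pi)"
    by (simp add: Basis_complex_def normal_density_def inner_complex_def power_divide)
  also have "\<dots> = exp (- (cmod z)\<^sup>2) / pi"
    by (simp add: cmod_power2 exp_add[symmetric] algebra_simps)
  finally show ?thesis ..
qed

lemma prob_space_cgauss: "prob_space cgauss"
proof
  have "emeasure cgauss UNIV
      = (\<integral>\<^sup>+(z::complex). (\<Prod>b\<in>Basis. ennreal (normal_density 0 (1 / sqrt 2) (z \<bullet> b))) \<partial>lborel)"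
    unfolding cgauss_def cgauss_density_eq_prod_normal
    by (subst emeasure_density) (auto intro!: nn_integral_cong simp: prod_ennreal)
  also have "\<dots> = (\<Prod>b\<in>(Basis :: complex set). \<integral>\<^sup>+x. ennreal (normal_density 0 (1 / sqrt 2) x) \<partial>lborel)"
    by (rule nn_integral_lborel_prod) auto
  also have "\<dots> = 1"
    using prob_space.emeasure_space_1[OF prob_space_normal_density[of "1 / sqrt 2" 0]]
    by (simp add: emeasure_density)
  finally show "emeasure cgauss (space cgauss) = 1" by simp
qed

interpretation cgauss: prob_space cgauss
  by (rule prob_space_cgauss)

lemma emeasure_lborel_ball_complex:
  "r \<ge> 0 \<Longrightarrow> emeasure lborel (ball (z::complex) r) = ennreal (pi * r\<^sup>2)"
  by (simp add: emeasure_ball unit_ball_vol_even[of 1, simplified])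

lemma emeasure_cgauss_eq_nn_integral:
  "A \<in> sets borel \<Longrightarrow>
     emeasure cgauss A = (\<integral>\<^sup>+z. ennreal (exp (- (cmod z)\<^sup>2) / pi) * indicator A z \<partial>lborel)"
  unfolding cgauss_def by (rule emeasure_density) auto

lemma measure_cgauss_ball_le: "r \<ge> 0 \<Longrightarrow> measure cgauss (ball 0 r) \<le> r\<^sup>2"
proof -
  assume "r \<ge> 0"
  have "emeasure cgauss (ball 0 r) \<le> (\<integral>\<^sup>+(z::complex). ennreal (1 / pi) * indicator (ball 0 r) z \<partial>lborel)"
    unfolding emeasure_cgauss_eq_nn_integral[OF borel_open[OF open_ball]]
    by (intro nn_integral_mono) (auto intro!: ennreal_leI divide_right_mono split: split_indicator)
  also have "\<dots> = ennreal (r\<^sup>2)"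
    using \<open>r \<ge> 0\<close>
    by (simp add: nn_integral_cmult_indicator emeasure_lborel_ball_complex ennreal_mult'[symmetric])
  finally show ?thesis
    by (simp add: cgauss.emeasure_eq_measure)
qed

lemma measure_cgauss_punctured_ball_ge:
  "r \<ge> 0 \<Longrightarrow> r\<^sup>2 * exp (- r\<^sup>2) \<le> measure cgauss (ball 0 r - {0})"
proof -
  assume "r \<ge> 0"
  have "emeasure lborel (ball (0::complex) r - {0}) = ennreal (pi * r\<^sup>2)"
    using \<open>r \<ge> 0\<close> by (subst emeasure_Diff_null_set) (auto simp: emeasure_lborel_ball_complex)
  then have "ennreal (r\<^sup>2 * exp (- r\<^sup>2))
      = (\<integral>\<^sup>+(z::complex). ennreal (exp (- r\<^sup>2) / pi) * indicator (ball 0 r - {0}) z \<partial>lborel)"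
    by (simp add: nn_integral_cmult_indicator ennreal_mult'[symmetric])
  also have "\<dots> \<le> emeasure cgauss (ball 0 r - {0})"
    by (subst emeasure_cgauss_eq_nn_integral)
      (auto intro!: nn_integral_mono ennreal_leI divide_right_mono
        simp: power_strict_mono less_imp_le split: split_indicator)
  finally show ?thesis
    by (simp add: cgauss.emeasure_eq_measure)
qed

lemma fade_measure_eq_PiM: "fade_measure M N = PiM ({1..M} \<times> {1..N}) (\<lambda>_. cgauss)"
  by (simp add: fade_measure_def cgauss_def)

lemma space_fade_measure: "space (fade_measure M N) = PiE ({1..M} \<times> {1..N}) (\<lambda>_. UNIV)"
  by (simp add: fade_measure_eq_PiM space_PiM)

lemma prob_space_fade_measure: "prob_space (fade_measure M N)"
  unfolding fade_measure_eq_PiM by (rule prob_space_PiM) (rule prob_space_cgauss)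

interpretation fade: prob_space "fade_measure M N" for M N
  by (rule prob_space_fade_measure)

lemma borel_measurable_fade [measurable]: "(\<lambda>H. H k) \<in> borel_measurable (fade_measure M N)"
proof (cases "k \<in> {1..M} \<times> {1..N}")
  case True
  then show ?thesis
    unfolding fade_measure_eq_PiM using measurable_component_singleton[of k _ "\<lambda>_. cgauss"]
    by (simp cong: measurable_cong_sets)
next
  case False
  then have "H k = undefined" if "H \<in> space (fade_measure M N)" for H
    using that by (cases k) (auto simp: space_fade_measure PiE_def extensional_def)
  then show ?thesis
    by (subst measurable_cong[where g = "\<lambda>_. undefined"]) auto
qed

definition fades_in :: "nat \<Rightarrow> nat \<Rightarrow> nat set \<Rightarrow> complex set \<Rightarrow> (nat \<times> nat \<Rightarrow> complex) set" where
  "fades_in M N D X = {H \<in> space (fade_measure M N). \<forall>i\<in>{1..M}. \<forall>j\<in>D. H (i, j) \<in> X}"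

lemma fades_in_sets:
  assumes [measurable]: "X \<in> sets borel"
  shows "fades_in M N D X \<in> sets (fade_measure M N)"
  unfolding fades_in_def by measurable

lemma prob_fades_in:
  assumes "D \<subseteq> {1..N}" "X \<in> sets borel"
  shows "measure (fade_measure M N) (fades_in M N D X) = measure cgauss X ^ (M * card D)"
proof -
  interpret product_prob_space "\<lambda>_. cgauss" "{1..M} \<times> {1..N}"
    by unfold_locales
  have "fades_in M N D X = {H \<in> space (fade_measure M N). \<forall>k\<in>{1..M} \<times> D. H k \<in> X}"
    by (auto simp: fades_in_def)
  also have "emeasure (fade_measure M N) \<dots> = (\<Prod>k\<in>{1..M} \<times> D. emeasure cgauss X)"
    unfolding fade_measure_eq_PiM
    by (rule emeasure_PiM_Collect) (use assms finite_subset[OF assms(1)] in auto)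
  finally have "emeasure (fade_measure M N) (fades_in M N D X) = (\<Prod>k\<in>{1..M} \<times> D. emeasure cgauss X)" .
  then show ?thesis
    using finite_subset[OF assms(1)]
    by (simp add: fade.emeasure_eq_measure
        cgauss.emeasure_eq_measure card_cartesian_product ennreal_power)
qed

subsection \<open>Rates and outage\<close>

definition channel_gain :: "nat \<Rightarrow> (nat \<times> nat \<Rightarrow> complex) \<Rightarrow> nat \<Rightarrow> real" where
  "channel_gain M H j = (\<Sum>i\<in>{1..M}. (cmod (H (i, j)))\<^sup>2)"

lemma rate_eq_channel_gain:
  "rate W \<sigma>0 M Pt H j = W * log 2 (1 + avg_snr W \<sigma>0 Pt * channel_gain M H j)"
  by (simp add: rate_def channel_gain_def sum_distrib_left)

lemma channel_gain_nonneg: "channel_gain M H j \<ge> 0"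
  by (simp add: channel_gain_def sum_nonneg)

lemma rate_less_iff:
  assumes "W > 0" "avg_snr W \<sigma>0 Pt > 0"
  shows "rate W \<sigma>0 M Pt H j < W * a \<longleftrightarrow> avg_snr W \<sigma>0 Pt * channel_gain M H j < 2 powr a - 1"
  using assms channel_gain_nonneg[of M H j]
  by (auto simp: rate_eq_channel_gain log_less_iff add_pos_nonneg)

lemma rate_pos_iff:
  assumes "W > 0" "avg_snr W \<sigma>0 Pt > 0"
  shows "rate W \<sigma>0 M Pt H j > 0 \<longleftrightarrow> channel_gain M H j > 0"
  using assms channel_gain_nonneg[of M H j]
  by (simp add: rate_eq_channel_gain zero_less_mult_iff add_pos_nonneg)

lemma rate_nonneg:
  assumes "W > 0" "avg_snr W \<sigma>0 Pt > 0"
  shows "rate W \<sigma>0 M Pt H j \<ge> 0"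
  using assms channel_gain_nonneg[of M H j] by (simp add: rate_eq_channel_gain add_pos_nonneg)

lemma borel_measurable_rate [measurable]:
  "(\<lambda>H. rate W \<sigma>0 M Pt H j) \<in> borel_measurable (fade_measure M N)"
  unfolding rate_def by measurable

lemma in_outage_measurable [measurable]:
  "Measurable.pred (fade_measure M N) (in_outage B T W \<sigma>0 M N K Pt S)"
  unfolding in_outage_def by measurable

lemma in_outage_if_slow_member:
  assumes "j \<in> S" "finite S" "B > 0" "W > 0" "avg_snr W \<sigma>0 Pt > 0"
    and "rate W \<sigma>0 M Pt H j > 0" "T * rate W \<sigma>0 M Pt H j < real N / real K * B"
  shows "in_outage B T W \<sigma>0 M N K Pt S H"
proof -
  have "T < real N / real K * B / rate W \<sigma>0 M Pt H j"
    unfolding pos_less_divide_eq[OF assms(6)] by (rule assms(7))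
  also have "\<dots> \<le> (\<Sum>j\<in>S. real N / real K * B / rate W \<sigma>0 M Pt H j)"
    using assms(1-5)
    by (intro member_le_sum) (auto intro!: divide_nonneg_nonneg mult_nonneg_nonneg rate_nonneg)
  finally show ?thesis
    unfolding in_outage_def .
qed

lemma slow_member_if_in_outage:
  assumes "in_outage B T W \<sigma>0 M N K Pt S H" "card S = K" "1 \<le> K" "K \<le> N" "B > 0" "T > 0"
  shows "\<exists>j\<in>S. rate W \<sigma>0 M Pt H j < real N * B / T"
proof (rule ccontr)
  assume no_slow: "\<not> ?thesis"
  have "real N / real K * B / rate W \<sigma>0 M Pt H j \<le> T / real K" if "j \<in> S" for j
  proof -
    have "0 < real N * B / T" "real N * B / T \<le> rate W \<sigma>0 M Pt H j"
      using no_slow that assms(3-6) by auto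
    then have "real N / real K * B / rate W \<sigma>0 M Pt H j \<le> real N / real K * B / (real N * B / T)"
      using assms(5) by (intro divide_left_mono mult_pos_pos) auto
    also have "\<dots> = T / real K"
      using assms(3-6) by simp
    finally show ?thesis .
  qed
  then have "(\<Sum>j\<in>S. real N / real K * B / rate W \<sigma>0 M Pt H j) \<le> T"
    using sum_mono[of S _ "\<lambda>_. T / real K"] assms(2,3) by simp
  then show False
    using assms(1) by (simp add: in_outage_def)
qed

text \<open>Zero fades are excluded because a device of rate \<open>0\<close> adds \<open>B'/0 = 0\<close> to the
  transmission time.\<close>
lemma in_outage_if_fades_small:
  assumes "S \<subseteq> {1..N}" "card S = K" "M \<ge> 1" "1 \<le> K" "K \<le> N"
    and "B > 0" "T > 0" "W > 0" "avg_snr W \<sigma>0 Pt > 0"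
    and small: "avg_snr W \<sigma>0 Pt * (real M * r\<^sup>2) \<le> 2 powr (real N * B / (real K * T * W)) - 1"
    and H: "H \<in> fades_in M N {1..N - K + 1} (ball 0 r - {0})"
  shows "in_outage B T W \<sigma>0 M N K Pt S H"
proof -
  have "finite S"
    using assms(1) finite_subset by blast
  have "S \<inter> {1..N - K + 1} \<noteq> {}"
  proof
    assume "S \<inter> {1..N - K + 1} = {}"
    then have "card (S \<union> {1..N - K + 1}) = K + (N - K + 1)"
      using assms(2) \<open>finite S\<close> by (subst card_Un_disjoint) auto
    moreover have "S \<union> {1..N - K + 1} \<subseteq> {1..N}"
      using assms(1,4,5) by auto
    then have "card (S \<union> {1..N - K + 1}) \<le> card {1..N}"
      by (intro card_mono) simp_all
    ultimately show False
      using assms(5) by simp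
  qed
  then obtain j where j: "j \<in> S" "j \<in> {1..N - K + 1}" by blast
  then have fade_j: "0 < cmod (H (i, j)) \<and> cmod (H (i, j)) < r" if "i \<in> {1..M}" for i
    using H that by (auto simp: fades_in_def)
  have "channel_gain M H j > 0"
    unfolding channel_gain_def using fade_j assms(3) by (intro sum_pos) auto
  have "channel_gain M H j < (\<Sum>i\<in>{1..M}. r\<^sup>2)"
    unfolding channel_gain_def using fade_j assms(3)
    by (intro sum_strict_mono) (auto intro!: power_strict_mono)
  then have "avg_snr W \<sigma>0 Pt * channel_gain M H j < avg_snr W \<sigma>0 Pt * (real M * r\<^sup>2)"
    using assms(9) by simp
  then have "avg_snr W \<sigma>0 Pt * channel_gain M H j < 2 powr (real N * B / (real K * T * W)) - 1"
    using small by linarith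
  then have "rate W \<sigma>0 M Pt H j < W * (real N * B / (real K * T * W))"
    unfolding rate_less_iff[OF assms(8,9)] .
  then have "T * rate W \<sigma>0 M Pt H j < real N / real K * B"
    using assms(4,7,8) by (simp add: field_simps)
  moreover have "rate W \<sigma>0 M Pt H j > 0"
    using \<open>channel_gain M H j > 0\<close> assms(8,9) by (simp add: rate_pos_iff)
  ultimately show ?thesis
    using j \<open>finite S\<close> assms(6,8,9) by (intro in_outage_if_slow_member) auto
qed

subsection \<open>Top-\<open>K\<close> schedulers\<close>

lemma topK_scheduler_iff_top_set:
  "topK_scheduler W \<sigma>0 M N K sched \<longleftrightarrow>
     (\<forall>Pt H. top_set {1..N} (rate W \<sigma>0 M Pt H) (sched Pt H) \<and> card (sched Pt H) = K)"
  unfolding topK_scheduler_def valid_scheduler_def top_set_def by blast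

lemma topK_scheduler_exists:
  assumes "K \<le> N"
  shows "\<exists>sched. topK_scheduler W \<sigma>0 M N K sched"
proof -
  have "\<exists>S. top_set {1..N} (rate W \<sigma>0 M Pt H) S \<and> card S = K" for Pt H
    using assms by (intro top_set_exists) auto
  then show ?thesis
    unfolding topK_scheduler_iff_top_set by metis
qed

text \<open>The outage event is the same for every top-\<open>K\<close> scheduler, and it is a finite union of
  measurable events, one for each candidate set of scheduled devices.\<close>
lemma measurable_outage_if_topK_scheduler:
  assumes "topK_scheduler W \<sigma>0 M N K sched"
  shows "measurable_outage B T W \<sigma>0 M N K sched"
  unfolding measurable_outage_def
proof (intro allI impI)
  fix Pt :: real
  let ?R = "\<lambda>H. rate W \<sigma>0 M Pt H"
  let ?cands = "{S. S \<subseteq> {1..N} \<and> card S = K}"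
  have top: "top_set {1..N} (?R H) (sched Pt H)" "card (sched Pt H) = K" for H
    using assms by (auto simp: topK_scheduler_iff_top_set)
  have "in_outage B T W \<sigma>0 M N K Pt (sched Pt H) H \<longleftrightarrow>
      (\<exists>S\<in>?cands. top_set {1..N} (?R H) S \<and> in_outage B T W \<sigma>0 M N K Pt S H)" for H
  proof
    show "\<exists>S\<in>?cands. top_set {1..N} (?R H) S \<and> in_outage B T W \<sigma>0 M N K Pt S H"
      if "in_outage B T W \<sigma>0 M N K Pt (sched Pt H) H"
      using that top[of H] by (auto simp: top_set_def)
  next
    assume "\<exists>S\<in>?cands. top_set {1..N} (?R H) S \<and> in_outage B T W \<sigma>0 M N K Pt S H"
    then obtain S where "top_set {1..N} (?R H) S" "card S = K" "in_outage B T W \<sigma>0 M N K Pt S H"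
      by blast
    with top[of H] show "in_outage B T W \<sigma>0 M N K Pt (sched Pt H) H"
      unfolding in_outage_def
      using sum_top_set_eq[of "{1..N}" "?R H" S "sched Pt H" "\<lambda>r. real N / real K * B / r"] by simp
  qed
  then have "{H \<in> space (fade_measure M N). in_outage B T W \<sigma>0 M N K Pt (sched Pt H) H}
      = {H \<in> space (fade_measure M N).
          \<exists>S\<in>?cands. top_set {1..N} (?R H) S \<and> in_outage B T W \<sigma>0 M N K Pt S H}"
    by blast
  also have "\<dots> \<in> sets (fade_measure M N)"
  proof -
    have [simp]: "finite ?cands"
      by (rule finite_subset[of _ "Pow {1..N}"]) auto
    have [measurable]: "Measurable.pred (fade_measure M N) (\<lambda>H. ?R H j' \<le> ?R H j)" for j j'
      unfolding pred_def by (rule borel_measurable_le) (rule borel_measurable_rate)+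
    show ?thesis
      unfolding top_set_def by measurable
  qed
  finally show "{H \<in> space (fade_measure M N). in_outage B T W \<sigma>0 M N K Pt (sched Pt H) H}
      \<in> sets (fade_measure M N)" .
qed

lemma fades_small_if_in_outage:
  assumes top: "top_set {1..N} (rate W \<sigma>0 M Pt H) S" and "card S = K" "1 \<le> K" "K \<le> N"
    and "B > 0" "T > 0" "W > 0" "avg_snr W \<sigma>0 Pt > 0" "r \<ge> 0"
    and large: "2 powr (real N * B / (T * W)) - 1 \<le> avg_snr W \<sigma>0 Pt * r\<^sup>2"
    and H: "H \<in> space (fade_measure M N)" "in_outage B T W \<sigma>0 M N K Pt S H"
  shows "\<exists>D. D \<subseteq> {1..N} \<and> card D = N - K + 1 \<and> H \<in> fades_in M N D (ball 0 r)"
proof -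
  obtain j0 where j0: "j0 \<in> S" "rate W \<sigma>0 M Pt H j0 < real N * B / T"
    using slow_member_if_in_outage[OF H(2)] assms(2-6) by blast
  define D where "D = insert j0 ({1..N} - S)"
  have "S \<subseteq> {1..N}"
    using top by (simp add: top_set_def)
  then have "D \<subseteq> {1..N}" "card D = N - K + 1"
    using j0(1) assms(2,4) finite_subset[of S "{1..N}"] by (auto simp: D_def card_Diff_subset)
  moreover have "cmod (H (i, j)) < r" if "i \<in> {1..M}" "j \<in> D" for i j
  proof -
    have "rate W \<sigma>0 M Pt H j \<le> rate W \<sigma>0 M Pt H j0"
      using that(2) j0(1) top unfolding D_def top_set_def by auto
    then have "rate W \<sigma>0 M Pt H j < W * (real N * B / (T * W))"
      using j0(2) assms(7) by simp
    then have "avg_snr W \<sigma>0 Pt * channel_gain M H j < avg_snr W \<sigma>0 Pt * r\<^sup>2"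
      using large unfolding rate_less_iff[OF assms(7,8)] by linarith
    then have "channel_gain M H j < r\<^sup>2"
      using assms(8) by simp
    moreover have "(cmod (H (i, j)))\<^sup>2 \<le> channel_gain M H j"
      unfolding channel_gain_def using that(1) by (intro member_le_sum) auto
    ultimately have "(cmod (H (i, j)))\<^sup>2 < r\<^sup>2"
      by linarith
    then show ?thesis
      using assms(9) by (rule power_less_imp_less_base)
  qed
  ultimately show ?thesis
    using H(1) by (auto simp: fades_in_def)
qed

subsection \<open>The outage probability\<close>

lemma outage_prob_lower_bound:
  fixes B T W \<sigma>0 Pt :: real and M N K :: nat
  defines "c \<equiv> (2 powr (real N * B / (real K * T * W)) - 1) / real M"
  assumes "M \<ge> 1" "1 \<le> K" "K \<le> N" "B > 0" "T > 0" "W > 0" "\<sigma>0 > 0"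
    and sched: "valid_scheduler N K sched" "measurable_outage B T W \<sigma>0 M N K sched"
    and large: "c * W * \<sigma>0 \<le> Pt"
  shows "(c * W * \<sigma>0 / exp 1) ^ (M * (N - K + 1)) / Pt ^ (M * (N - K + 1))
           \<le> outage_prob B T W \<sigma>0 M N K sched Pt"
proof -
  let ?n = "M * (N - K + 1)"
  let ?Out = "{H \<in> space (fade_measure M N). in_outage B T W \<sigma>0 M N K Pt (sched Pt H) H}"
  define r where "r = sqrt (c * W * \<sigma>0 / Pt)"
  have "c > 0"
    using assms(2-8) by (simp add: c_def)
  then have "c * W * \<sigma>0 > 0"
    using assms(7,8) by simp
  then have "Pt > 0"
    using large by linarith
  have r: "r > 0" "r\<^sup>2 \<le> 1" "r\<^sup>2 = c * W * \<sigma>0 / Pt"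
    using \<open>c > 0\<close> \<open>Pt > 0\<close> large assms(7,8) by (simp_all add: r_def)
  have snr: "avg_snr W \<sigma>0 Pt > 0"
    "avg_snr W \<sigma>0 Pt * (real M * r\<^sup>2) = 2 powr (real N * B / (real K * T * W)) - 1"
    using \<open>Pt > 0\<close> assms(2,7,8) by (simp_all add: avg_snr_def r(3) c_def)
  have "fades_in M N {1..N - K + 1} (ball 0 r - {0}) \<subseteq> ?Out"
  proof
    fix H
    assume H: "H \<in> fades_in M N {1..N - K + 1} (ball 0 r - {0})"
    have "in_outage B T W \<sigma>0 M N K Pt (sched Pt H) H"
      using sched(1) assms(2-7) snr(1) snr(2)[symmetric] H
      by (intro in_outage_if_fades_small[where r = r]) (auto simp: valid_scheduler_def)
    with H show "H \<in> ?Out"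
      by (simp add: fades_in_def)
  qed
  then have "measure (fade_measure M N) (fades_in M N {1..N - K + 1} (ball 0 r - {0}))
      \<le> outage_prob B T W \<sigma>0 M N K sched Pt"
    using sched(2) \<open>Pt > 0\<close> unfolding outage_prob_def measurable_outage_def
    by (intro fade.finite_measure_mono) auto
  moreover have "measure (fade_measure M N) (fades_in M N {1..N - K + 1} (ball 0 r - {0}))
      = measure cgauss (ball 0 r - {0}) ^ ?n"
    using assms(3,4) by (subst prob_fades_in) auto
  moreover have "(r\<^sup>2 / exp 1) ^ ?n \<le> measure cgauss (ball 0 r - {0}) ^ ?n"
  proof (rule power_mono)
    have "r\<^sup>2 / exp 1 \<le> r\<^sup>2 * exp (- r\<^sup>2)"
      using r(2) by (simp add: exp_minus divide_inverse le_imp_inverse_le mult_left_mono)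
    also have "\<dots> \<le> measure cgauss (ball 0 r - {0})"
      using r(1) by (intro measure_cgauss_punctured_ball_ge) simp
    finally show "r\<^sup>2 / exp 1 \<le> measure cgauss (ball 0 r - {0})" .
  qed simp
  moreover have "(r\<^sup>2 / exp 1) ^ ?n = (c * W * \<sigma>0 / exp 1) ^ ?n / Pt ^ ?n"
    by (simp add: r(3) power_divide power_mult_distrib)
  ultimately show ?thesis
    by simp
qed

lemma outage_prob_upper_bound:
  fixes B T W \<sigma>0 Pt :: real and M N K :: nat
  defines "c \<equiv> 2 powr (real N * B / (T * W)) - 1"
  assumes "1 \<le> K" "K \<le> N" "B > 0" "T > 0" "W > 0" "\<sigma>0 > 0" "Pt > 0"
    and sched: "topK_scheduler W \<sigma>0 M N K sched" "measurable_outage B T W \<sigma>0 M N K sched"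
  shows "outage_prob B T W \<sigma>0 M N K sched Pt
           \<le> real (N choose (N - K + 1)) * (c * W * \<sigma>0) ^ (M * (N - K + 1)) / Pt ^ (M * (N - K + 1))"
proof -
  let ?n = "M * (N - K + 1)"
  let ?Out = "{H \<in> space (fade_measure M N). in_outage B T W \<sigma>0 M N K Pt (sched Pt H) H}"
  let ?Ds = "{D. D \<subseteq> {1..N} \<and> card D = N - K + 1}"
  define r where "r = sqrt (c * W * \<sigma>0 / Pt)"
  have "c > 0"
    using assms(2-7) by (simp add: c_def)
  then have r: "r \<ge> 0" "r\<^sup>2 = c * W * \<sigma>0 / Pt"
    using assms(6-8) by (simp_all add: r_def)
  have snr: "avg_snr W \<sigma>0 Pt > 0" "avg_snr W \<sigma>0 Pt * r\<^sup>2 = c"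
    using assms(6-8) by (simp_all add: avg_snr_def r(2))
  have "finite ?Ds"
    by (rule finite_subset[of _ "Pow {1..N}"]) auto
  have "?Out \<subseteq> (\<Union>D\<in>?Ds. fades_in M N D (ball 0 r))"
  proof
    fix H
    assume "H \<in> ?Out"
    then have H: "H \<in> space (fade_measure M N)" "in_outage B T W \<sigma>0 M N K Pt (sched Pt H) H"
      by auto
    have "top_set {1..N} (rate W \<sigma>0 M Pt H) (sched Pt H)" "card (sched Pt H) = K"
      using sched(1) by (simp_all add: topK_scheduler_iff_top_set)
    moreover have "2 powr (real N * B / (T * W)) - 1 \<le> avg_snr W \<sigma>0 Pt * r\<^sup>2"
      using snr(2) by (simp add: c_def)
    ultimately obtain D where "D \<in> ?Ds" "H \<in> fades_in M N D (ball 0 r)"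
      using fades_small_if_in_outage[OF _ _ assms(2-6) snr(1) r(1) _ H] by blast
    then show "H \<in> (\<Union>D\<in>?Ds. fades_in M N D (ball 0 r))"
      by blast
  qed
  then have "outage_prob B T W \<sigma>0 M N K sched Pt
      \<le> measure (fade_measure M N) (\<Union>D\<in>?Ds. fades_in M N D (ball 0 r))"
    using sched(2) assms(8) \<open>finite ?Ds\<close> unfolding outage_prob_def measurable_outage_def
    by (intro fade.finite_measure_mono sets.finite_UN fades_in_sets) auto
  also have "\<dots> \<le> (\<Sum>D\<in>?Ds. measure (fade_measure M N) (fades_in M N D (ball 0 r)))"
    using \<open>finite ?Ds\<close> by (intro fade.finite_measure_subadditive_finite) (auto intro!: fades_in_sets)
  also have "\<dots> \<le> (\<Sum>D\<in>?Ds. (r\<^sup>2) ^ ?n)"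
    using r(1) by (intro sum_mono) (auto simp: prob_fades_in intro!: power_mono measure_cgauss_ball_le)
  also have "\<dots> = real (N choose (N - K + 1)) * (c * W * \<sigma>0) ^ ?n / Pt ^ ?n"
    by (simp add: n_subsets r(2) power_divide)
  finally show ?thesis .
qed

lemma outage_prob_eventually_ge:
  assumes "M \<ge> 1" "1 \<le> K" "K \<le> N" "B > 0" "T > 0" "W > 0" "\<sigma>0 > 0"
    and "valid_scheduler N K sched" "measurable_outage B T W \<sigma>0 M N K sched"
  shows "\<exists>A>0. eventually (\<lambda>Pt. A / Pt ^ (M * (N - K + 1)) \<le> outage_prob B T W \<sigma>0 M N K sched Pt) at_top"
proof -
  define c where "c = (2 powr (real N * B / (real K * T * W)) - 1) / real M"
  have "c > 0"
    using assms(1-7) by (simp add: c_def)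
  then have "(c * W * \<sigma>0 / exp 1) ^ (M * (N - K + 1)) > 0"
    using assms(6,7) by simp
  moreover have "eventually (\<lambda>Pt. (c * W * \<sigma>0 / exp 1) ^ (M * (N - K + 1)) / Pt ^ (M * (N - K + 1))
      \<le> outage_prob B T W \<sigma>0 M N K sched Pt) at_top"
    using eventually_ge_at_top[of "c * W * \<sigma>0"]
    by eventually_elim (use assms outage_prob_lower_bound in \<open>simp add: c_def\<close>)
  ultimately show ?thesis
    by blast
qed

lemma outage_prob_eventually_le:
  assumes "1 \<le> K" "K \<le> N" "B > 0" "T > 0" "W > 0" "\<sigma>0 > 0"
    and "topK_scheduler W \<sigma>0 M N K sched" "measurable_outage B T W \<sigma>0 M N K sched"
  shows "\<exists>C>0. eventually (\<lambda>Pt. outage_prob B T W \<sigma>0 M N K sched Pt \<le> C / Pt ^ (M * (N - K + 1))) at_top"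
proof -
  define C where
    "C = real (N choose (N - K + 1)) * ((2 powr (real N * B / (T * W)) - 1) * W * \<sigma>0) ^ (M * (N - K + 1))"
  have "eventually
      (\<lambda>Pt. outage_prob B T W \<sigma>0 M N K sched Pt \<le> max C 1 / Pt ^ (M * (N - K + 1))) at_top"
    using eventually_gt_at_top[of 0]
  proof eventually_elim
    case (elim Pt)
    have "outage_prob B T W \<sigma>0 M N K sched Pt \<le> C / Pt ^ (M * (N - K + 1))"
      unfolding C_def using outage_prob_upper_bound[OF assms(1-6) elim assms(7,8)] by simp
    also have "\<dots> \<le> max C 1 / Pt ^ (M * (N - K + 1))"
      using elim by (intro divide_right_mono) auto
    finally show ?case .
  qed
  then show ?thesis
    by (intro exI[of _ "max C 1"]) simp
qed

theorem proposition1: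
  fixes B T W \<sigma>0 :: real and M N K :: nat
  assumes "M \<ge> 1" and "N \<ge> 1" and "1 \<le> K" and "K \<le> N"
    and "B > 0" and "T > 0" and "W > 0" and "\<sigma>0 > 0"
  shows "(\<exists>sched. topK_scheduler W \<sigma>0 M N K sched \<and> measurable_outage B T W \<sigma>0 M N K sched)
    \<and> (\<forall>sched. topK_scheduler W \<sigma>0 M N K sched \<and> measurable_outage B T W \<sigma>0 M N K sched \<longrightarrow>
          has_diversity_order B T W \<sigma>0 M N K sched (real (M * (N - K + 1))))
    \<and> (\<forall>sched d. valid_scheduler N K sched \<and> measurable_outage B T W \<sigma>0 M N K sched
          \<and> has_diversity_order B T W \<sigma>0 M N K sched d \<longrightarrow> d \<le> real (M * (N - K + 1)))"
proof (intro conjI allI impI)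
  show "\<exists>sched. topK_scheduler W \<sigma>0 M N K sched \<and> measurable_outage B T W \<sigma>0 M N K sched"
    using topK_scheduler_exists[OF assms(4)] measurable_outage_if_topK_scheduler by blast
next
  fix sched
  assume sched: "topK_scheduler W \<sigma>0 M N K sched \<and> measurable_outage B T W \<sigma>0 M N K sched"
  then have "valid_scheduler N K sched"
    by (simp add: topK_scheduler_def)
  obtain A where "A > 0"
    "eventually (\<lambda>Pt. A / Pt ^ (M * (N - K + 1)) \<le> outage_prob B T W \<sigma>0 M N K sched Pt) at_top"
    using outage_prob_eventually_ge[OF assms(1,3-8) \<open>valid_scheduler N K sched\<close>] sched by blast
  moreover obtain C where "C > 0"
    "eventually (\<lambda>Pt. outage_prob B T W \<sigma>0 M N K sched Pt \<le> C / Pt ^ (M * (N - K + 1))) at_top"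
    using outage_prob_eventually_le[OF assms(3-8)] sched by blast
  ultimately show "has_diversity_order B T W \<sigma>0 M N K sched (real (M * (N - K + 1)))"
    unfolding has_diversity_order_def by (intro power_law_exponent[of A C] eventually_conj)
next
  fix sched d
  assume sched: "valid_scheduler N K sched \<and> measurable_outage B T W \<sigma>0 M N K sched
    \<and> has_diversity_order B T W \<sigma>0 M N K sched d"
  then obtain A where "A > 0"
    "eventually (\<lambda>Pt. A / Pt ^ (M * (N - K + 1)) \<le> outage_prob B T W \<sigma>0 M N K sched Pt) at_top"
    using outage_prob_eventually_ge[OF assms(1,3-8)] by blast
  then show "d \<le> real (M * (N - K + 1))"
    using sched unfolding has_diversity_order_def by (intro power_law_exponent_le) auto
qed

end
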